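(* Let $f^+,f^-,f^\circ:[0,1]\to[0,1]$ satisfy $f^+(0)=f^-(0)=f^\circ(0)=0$, let $x$ be a feasible LP solution, and let $\alpha>0$. If $ALG(uvw)\le\alpha\, LP(uvw)$ for every $u,v,w\in V$, then for every step $t$ of the pivot rounding algorithm, $\mathbb{E}[ALG_t]\le\alpha\,\mathbb{E}[LP_t]$. Consequently the expected cost of the clustering returned by the algorithm is at most $\alpha$ times the LP objective value of $x$.
   Context: Setting: finite vertex set $V$; every pair of distinct vertices is a positive edge ($E^+$), a negative edge ($E^-$), or not an edge. The cost of a clustering (partition of $V$) is the number of positive edges with endpoints in different clusters plus the number of negative edges with endpoints in the same cluster. LP: variables $x_{uv}=x_{vu}\in[0,1]$, $x_{uu}=0$, $x_{uv}+x_{vw}\ge x_{uw}$ for all $u,v,w$; objective $\sum_{E^+}x_{uv}+\sum_{E^-}(1-x_{uv})$. For $u,w\in V$ let $p_{uw}=f^+(x_{uw})$, $f^-(x_{uw})$, or $f^\circ(x_{uw})$ according as $(u,w)$ is a positive edge, negative edge, or non-edge (so $p_{uu}=0$). Pivot rounding algorithm: $V_0=V$; while $V_t\ne\emptyset$: choose pivot $w_t\in V_t$ uniformly at random, put each $u\in V_t$ in $S_t$ independently with probability $1-p_{uw_t}$, set $V_{t+1}=V_t\setminus S_t$; output the $S_t$. $ALG_t$ is the number of positive edges $(u,v)$ with $u,v\in V_t$ and exactly one endpoint in $S_t$ plus the number of negative edges $(u,v)$ with $u,v\in V_t$ and both endpoints in $S_t$; $LP_t$ is the sum over positive edges $(u,v)$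 with $u,v\in V_t$ and at least one endpoint in $S_t$ of $x_{uv}$, plus the sum over such negative edges of $1-x_{uv}$ (with $LP_t=ALG_t=0$ after termination). For $u,v,w\in V$ define $e.cost_w(u,v)=p_{uw}(1-p_{vw})+(1-p_{uw})p_{vw}$ if $(u,v)\in E^+$, $(1-p_{uw})(1-p_{vw})$ if $(u,v)\in E^-$, $0$ otherwise; $e.lp_w(u,v)=(1-p_{uw}p_{vw})x_{uv}$ if $(u,v)\in E^+$, $(1-p_{uw}p_{vw})(1-x_{uv})$ if $(u,v)\in E^-$, $0$ otherwise. These are also defined for $u=v$: each pair $(u,u)$ is treated either as a non-edge or as a positive edge (positive self-loop; this is the convention used for complete graphs). Set $ALG(uvw)=e.cost_w(u,v)+e.cost_v(w,u)+e.cost_u(v,w)$ and $LP(uvw)=e.lp_w(u,v)+e.lp_v(w,u)+e.lp_u(v,w)$. *)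

theory Defs
  imports "HOL-Probability.Probability"
begin

text \<open>Edges: pos u v / neg u v are symmetric relations on the vertex set (ordered-pair
  representation of undirected edges). Sums over edges are sums over ordered pairs of
  distinct vertices divided by 2.\<close>

definition offdiag :: "'a set \<Rightarrow> ('a \<times> 'a) set" where
  "offdiag U = {(u,v). u \<in> U \<and> v \<in> U \<and> u \<noteq> v}"

definition lp_feasible :: "'a set \<Rightarrow> ('a \<Rightarrow> 'a \<Rightarrow> real) \<Rightarrow> bool" where
  "lp_feasible V x \<longleftrightarrow>
     (\<forall>u\<in>V. \<forall>v\<in>V. x u v = x v u \<and> 0 \<le> x u v \<and> x u v \<le> 1) \<and>
     (\<forall>u\<in>V. x u u = 0) \<and>
     (\<forall>u\<in>V. \<forall>v\<in>V. \<forall>w\<in>V. x u v + x v w \<ge> x u w)"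

definition lp_obj :: "('a \<Rightarrow> 'a \<Rightarrow> bool) \<Rightarrow> ('a \<Rightarrow> 'a \<Rightarrow> bool) \<Rightarrow> ('a \<Rightarrow> 'a \<Rightarrow> real) \<Rightarrow> 'a set \<Rightarrow> real" where
  "lp_obj pos neg x V =
     (\<Sum>(u,v)\<in>offdiag V. if pos u v then x u v else if neg u v then 1 - x u v else 0) / 2"

definition prob_p :: "(real \<Rightarrow> real) \<Rightarrow> (real \<Rightarrow> real) \<Rightarrow> (real \<Rightarrow> real) \<Rightarrow>
    ('a \<Rightarrow> 'a \<Rightarrow> bool) \<Rightarrow> ('a \<Rightarrow> 'a \<Rightarrow> bool) \<Rightarrow> ('a \<Rightarrow> 'a \<Rightarrow> real) \<Rightarrow> 'a \<Rightarrow> 'a \<Rightarrow> real" where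
  "prob_p fp fm fo pos neg x u w =
     (if pos u w then fp (x u w) else if neg u w then fm (x u w) else fo (x u w))"

definition pivot_step :: "('a \<Rightarrow> 'a \<Rightarrow> real) \<Rightarrow> 'a set \<Rightarrow> 'a set pmf" where
  "pivot_step p U = (if U = {} then return_pmf {} else
     pmf_of_set U \<bind> (\<lambda>w.
     Pi_pmf U False (\<lambda>u. bernoulli_pmf (1 - p u w)) \<bind> (\<lambda>b.
     return_pmf {u \<in> U. b u})))"

text \<open>State after t steps: (V_t, clusters produced so far).\<close>
primrec pivot_run :: "('a \<Rightarrow> 'a \<Rightarrow> real) \<Rightarrow> 'a set \<Rightarrow> nat \<Rightarrow> ('a set \<times> 'a set set) pmf" where
  "pivot_run p V 0 = return_pmf (V, {})"
| "pivot_run p V (Suc t) = pivot_run p V t \<bind> (\<lambda>(U, C).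
     if U = {} then return_pmf (U, C)
     else map_pmf (\<lambda>S. (U - S, insert S C)) (pivot_step p U))"

definition alg_step :: "('a \<Rightarrow> 'a \<Rightarrow> bool) \<Rightarrow> ('a \<Rightarrow> 'a \<Rightarrow> bool) \<Rightarrow> 'a set \<Rightarrow> 'a set \<Rightarrow> real" where
  "alg_step pos neg U S =
     (\<Sum>(u,v)\<in>offdiag U.
        (if pos u v \<and> ((u \<in> S) \<noteq> (v \<in> S)) then 1 else 0)
      + (if neg u v \<and> u \<in> S \<and> v \<in> S then 1 else 0)) / 2"

definition lp_step :: "('a \<Rightarrow> 'a \<Rightarrow> bool) \<Rightarrow> ('a \<Rightarrow> 'a \<Rightarrow> bool) \<Rightarrow> ('a \<Rightarrow> 'a \<Rightarrow> real) \<Rightarrow> 'a set \<Rightarrow> 'a set \<Rightarrow> real" where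
  "lp_step pos neg x U S =
     (\<Sum>(u,v)\<in>offdiag U.
        if u \<in> S \<or> v \<in> S then
          (if pos u v then x u v else if neg u v then 1 - x u v else 0)
        else 0) / 2"

definition exp_alg :: "('a \<Rightarrow> 'a \<Rightarrow> real) \<Rightarrow> ('a \<Rightarrow> 'a \<Rightarrow> bool) \<Rightarrow> ('a \<Rightarrow> 'a \<Rightarrow> bool) \<Rightarrow> 'a set \<Rightarrow> nat \<Rightarrow> real" where
  "exp_alg p pos neg V t =
     measure_pmf.expectation (pivot_run p V t)
       (\<lambda>(U, C). measure_pmf.expectation (pivot_step p U) (\<lambda>S. alg_step pos neg U S))"

definition exp_lp :: "('a \<Rightarrow> 'a \<Rightarrow> real) \<Rightarrow> ('a \<Rightarrow> 'a \<Rightarrow> bool) \<Rightarrow> ('a \<Rightarrow> 'a \<Rightarrow> bool) \<Rightarrow> ('a \<Rightarrow> 'a \<Rightarrow> real) \<Rightarrow> 'a set \<Rightarrow> nat \<Rightarrow> real" where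
  "exp_lp p pos neg x V t =
     measure_pmf.expectation (pivot_run p V t)
       (\<lambda>(U, C). measure_pmf.expectation (pivot_step p U) (\<lambda>S. lp_step pos neg x U S))"

text \<open>Output clustering: after card V steps the algorithm has terminated
  (each step removes at least the pivot).\<close>
definition pivot_output :: "('a \<Rightarrow> 'a \<Rightarrow> real) \<Rightarrow> 'a set \<Rightarrow> 'a set set pmf" where
  "pivot_output p V = map_pmf snd (pivot_run p V (card V))"

definition cluster_cost :: "('a \<Rightarrow> 'a \<Rightarrow> bool) \<Rightarrow> ('a \<Rightarrow> 'a \<Rightarrow> bool) \<Rightarrow> 'a set \<Rightarrow> 'a set set \<Rightarrow> real" where
  "cluster_cost pos neg V C =
     (\<Sum>(u,v)\<in>offdiag V.
        (if pos u v \<and> \<not> (\<exists>S\<in>C. u \<in> S \<and> v \<in> S) then 1 else 0)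
      + (if neg u v \<and> (\<exists>S\<in>C. u \<in> S \<and> v \<in> S) then 1 else 0)) / 2"

definition ecost :: "('a \<Rightarrow> 'a \<Rightarrow> real) \<Rightarrow> ('a \<Rightarrow> 'a \<Rightarrow> bool) \<Rightarrow> ('a \<Rightarrow> 'a \<Rightarrow> bool) \<Rightarrow> 'a \<Rightarrow> 'a \<Rightarrow> 'a \<Rightarrow> real" where
  "ecost p pos neg w u v =
     (if pos u v then p u w * (1 - p v w) + (1 - p u w) * p v w
      else if neg u v then (1 - p u w) * (1 - p v w) else 0)"

definition elp :: "('a \<Rightarrow> 'a \<Rightarrow> real) \<Rightarrow> ('a \<Rightarrow> 'a \<Rightarrow> bool) \<Rightarrow> ('a \<Rightarrow> 'a \<Rightarrow> bool) \<Rightarrow> ('a \<Rightarrow> 'a \<Rightarrow> real) \<Rightarrow> 'a \<Rightarrow> 'a \<Rightarrow> 'a \<Rightarrow> real" where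
  "elp p pos neg x w u v =
     (if pos u v then (1 - p u w * p v w) * x u v
      else if neg u v then (1 - p u w * p v w) * (1 - x u v) else 0)"

definition ALG3 :: "('a \<Rightarrow> 'a \<Rightarrow> real) \<Rightarrow> ('a \<Rightarrow> 'a \<Rightarrow> bool) \<Rightarrow> ('a \<Rightarrow> 'a \<Rightarrow> bool) \<Rightarrow> 'a \<Rightarrow> 'a \<Rightarrow> 'a \<Rightarrow> real" where
  "ALG3 p pos neg u v w = ecost p pos neg w u v + ecost p pos neg v w u + ecost p pos neg u v w"

definition LP3 :: "('a \<Rightarrow> 'a \<Rightarrow> real) \<Rightarrow> ('a \<Rightarrow> 'a \<Rightarrow> bool) \<Rightarrow> ('a \<Rightarrow> 'a \<Rightarrow> bool) \<Rightarrow> ('a \<Rightarrow> 'a \<Rightarrow> real) \<Rightarrow> 'a \<Rightarrow> 'a \<Rightarrow> 'a \<Rightarrow> real" where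
  "LP3 p pos neg x u v w = elp p pos neg x w u v + elp p pos neg x v w u + elp p pos neg x u v w"

end

theory Submission
  imports Defs
begin

text \<open>
  Conditioned on the remaining set \<open>V\<^sub>t = U\<close>, the pivot is uniform on \<open>U\<close> and the vertices
  join \<open>S\<^sub>t\<close> independently, so \<open>E[ALG\<^sub>t | U]\<close> and \<open>E[LP\<^sub>t | U]\<close> are averages over pivots \<open>w\<close>
  of the sums of \<open>e.cost\<^sub>w(u,v)\<close> and \<open>e.lp\<^sub>w(u,v)\<close> over pairs in \<open>U\<close>. Adding the diagonal terms
  (\<open>e.cost \<ge> 0\<close>, \<open>e.lp = 0\<close>) turns these into sums over all triples of \<open>U\<close>, in which every
  triangle occurs with its three rotations; the hypothesis on \<open>ALG(uvw)\<close> therefore bounds the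
  step in expectation, and averaging over \<open>V\<^sub>t\<close> gives \<open>E[ALG\<^sub>t] \<le> \<alpha> E[LP\<^sub>t]\<close>.
  The cost and the LP value of a pair are fixed once one of its endpoints is clustered, so the
  cost (LP value) of the settled pairs is a potential that grows by \<open>ALG\<^sub>t\<close> (\<open>LP\<^sub>t\<close>) at step \<open>t\<close>.
  After \<open>|V|\<close> steps every pair is settled: the expected cost is \<open>\<Sum>\<^sub>t E[ALG\<^sub>t]\<close>, while
  \<open>\<Sum>\<^sub>t E[LP\<^sub>t]\<close> is at most the LP objective.
\<close>

section \<open>Independent Bernoulli coordinates\<close>

lemma finite_set_Pi_pmf:
  assumes "finite A" "\<And>a. a \<in> A \<Longrightarrow> finite (set_pmf (p a))"
  shows "finite (set_pmf (Pi_pmf A dflt p))"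
  using assms by (intro finite_subset[OF set_Pi_pmf_subset'] finite_PiE_dflt) auto

lemma map_pmf_Pi_pmf_pair:
  assumes "finite A" "u \<in> A" "v \<in> A" "u \<noteq> v"
  shows "map_pmf (\<lambda>f. (f u, f v)) (Pi_pmf A dflt p) = pair_pmf (p u) (p v)"
proof -
  have "map_pmf (\<lambda>f. (f u, f v)) (Pi_pmf A dflt p) = map_pmf (\<lambda>f. (f u, f v)) (Pi_pmf {u, v} dflt p)"
    using assms by (subst Pi_pmf_subset[of A "{u, v}"]) (auto simp: pmf.map_comp o_def)
  also have "Pi_pmf {u, v} dflt p = map_pmf (\<lambda>(y, f). f(u := y)) (pair_pmf (p u) (Pi_pmf {v} dflt p))"
    using assms by (subst Pi_pmf_insert) auto
  finally show ?thesis
    using assms(4) by (simp add: Pi_pmf_singleton pmf.map_comp o_def pair_map_pmf2 case_prod_unfold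
        map_pmf_ident[unfolded id_def])
qed

lemma expectation_Pi_pmf_bernoulli_pair:
  fixes \<phi> :: "bool \<Rightarrow> bool \<Rightarrow> real"
  assumes "finite A" "u \<in> A" "v \<in> A" "u \<noteq> v"
    and r: "\<And>a. a \<in> A \<Longrightarrow> 0 \<le> r a \<and> r a \<le> 1"
  shows "measure_pmf.expectation (Pi_pmf A dflt (\<lambda>a. bernoulli_pmf (r a))) (\<lambda>f. \<phi> (f u) (f v))
       = r u * r v * \<phi> True True + r u * (1 - r v) * \<phi> True False
       + (1 - r u) * r v * \<phi> False True + (1 - r u) * (1 - r v) * \<phi> False False"
proof -
  have "measure_pmf.expectation (Pi_pmf A dflt (\<lambda>a. bernoulli_pmf (r a))) (\<lambda>f. \<phi> (f u) (f v))
      = measure_pmf.expectation (pair_pmf (bernoulli_pmf (r u)) (bernoulli_pmf (r v))) (case_prod \<phi>)"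
    by (subst map_pmf_Pi_pmf_pair[OF assms(1-4), symmetric]) simp
  also have "\<dots> = (\<Sum>z\<in>UNIV \<times> UNIV. case_prod \<phi> z * pmf (pair_pmf (bernoulli_pmf (r u)) (bernoulli_pmf (r v))) z)"
    by (rule integral_measure_pmf_real) auto
  finally show ?thesis
    using r[OF assms(2)] r[OF assms(3)]
    by (simp add: sum.cartesian_product[symmetric] UNIV_bool pmf_pair algebra_simps)
qed

lemma expectation_Pi_pmf_bernoulli_offdiag_sum:
  fixes \<phi> :: "'a \<Rightarrow> 'a \<Rightarrow> bool \<Rightarrow> bool \<Rightarrow> real"
  assumes "finite A" and r: "\<And>a. a \<in> A \<Longrightarrow> 0 \<le> r a \<and> r a \<le> 1"
  shows "measure_pmf.expectation (Pi_pmf A dflt (\<lambda>a. bernoulli_pmf (r a)))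
           (\<lambda>f. \<Sum>(u, v)\<in>offdiag A. \<phi> u v (f u) (f v))
       = (\<Sum>(u, v)\<in>offdiag A. r u * r v * \<phi> u v True True + r u * (1 - r v) * \<phi> u v True False
           + (1 - r u) * r v * \<phi> u v False True + (1 - r u) * (1 - r v) * \<phi> u v False False)"
proof -
  have "integrable (Pi_pmf A dflt (\<lambda>a. bernoulli_pmf (r a))) g" for g :: "_ \<Rightarrow> real"
    using assms by (intro integrable_measure_pmf_finite finite_set_Pi_pmf) auto
  then show ?thesis
    using assms by (simp add: case_prod_unfold offdiag_def expectation_Pi_pmf_bernoulli_pair)
qed

section \<open>One pivot step\<close>

lemma set_pivot_step_subset: "S \<in> set_pmf (pivot_step p U) \<Longrightarrow> S \<subseteq> U"
  by (auto simp: pivot_step_def split: if_splits)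

lemma finite_set_pivot_step: "finite U \<Longrightarrow> finite (set_pmf (pivot_step p U))"
  by (rule finite_subset[of _ "Pow U"]) (auto dest: set_pivot_step_subset)

lemma set_pivot_step_nonempty:
  assumes "finite U" "U \<noteq> {}" "\<And>w. w \<in> U \<Longrightarrow> p w w = 0" "S \<in> set_pmf (pivot_step p U)"
  shows "S \<noteq> {}"
proof -
  obtain w b where w: "w \<in> U" and S: "S = {u \<in> U. b u}"
    and b: "b \<in> set_pmf (Pi_pmf U False (\<lambda>u. bernoulli_pmf (1 - p u w)))"
    using assms by (auto simp: pivot_step_def)
  have "b w \<in> set_pmf (bernoulli_pmf (1 - p w w))"
    using b w set_Pi_pmf_subset'[OF assms(1)] by (force simp: PiE_dflt_def)
  then have "b w"
    using assms(3)[OF w] by (cases "b w") (auto simp: set_pmf_iff)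
  then show ?thesis
    using S w by auto
qed

lemma expectation_pivot_step:
  fixes h :: "'a set \<Rightarrow> real"
  assumes "finite U" "U \<noteq> {}"
  shows "measure_pmf.expectation (pivot_step p U) h
       = (\<Sum>w\<in>U. measure_pmf.expectation (Pi_pmf U False (\<lambda>u. bernoulli_pmf (1 - p u w)))
                   (\<lambda>b. h {u \<in> U. b u})) / card U"
proof -
  have "pivot_step p U = pmf_of_set U \<bind>
      (\<lambda>w. map_pmf (\<lambda>b. {u \<in> U. b u}) (Pi_pmf U False (\<lambda>u. bernoulli_pmf (1 - p u w))))"
    using assms by (simp add: pivot_step_def map_pmf_def)
  then show ?thesis
    using assms
    by (simp add: pmf_expectation_bind_pmf_of_set finite_set_Pi_pmf sum_divide_distrib field_simps)
qed

lemma expectation_alg_step_given_pivot: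
  assumes "finite U" "\<And>u. u \<in> U \<Longrightarrow> 0 \<le> p u w \<and> p u w \<le> 1"
    and "\<And>u v. u \<in> U \<Longrightarrow> v \<in> U \<Longrightarrow> \<not> (pos u v \<and> neg u v)"
  shows "measure_pmf.expectation (Pi_pmf U False (\<lambda>u. bernoulli_pmf (1 - p u w)))
           (\<lambda>b. alg_step pos neg U {u \<in> U. b u})
       = (\<Sum>(u, v)\<in>offdiag U. ecost p pos neg w u v) / 2"
proof -
  define \<phi> where "\<phi> u v a c = (if pos u v \<and> a \<noteq> c then 1 else 0) + (if neg u v \<and> a \<and> c then 1 else 0 :: real)"
    for u v a c
  have "alg_step pos neg U {u \<in> U. b u} = (\<Sum>(u, v)\<in>offdiag U. \<phi> u v (b u) (b v)) / 2" for b
    unfolding alg_step_def \<phi>_def by (intro arg_cong2[where f = "(/)"] sum.cong) (auto simp: offdiag_def)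
  then have "measure_pmf.expectation (Pi_pmf U False (\<lambda>u. bernoulli_pmf (1 - p u w)))
           (\<lambda>b. alg_step pos neg U {u \<in> U. b u})
      = measure_pmf.expectation (Pi_pmf U False (\<lambda>u. bernoulli_pmf (1 - p u w)))
           (\<lambda>b. \<Sum>(u, v)\<in>offdiag U. \<phi> u v (b u) (b v)) / 2"
    by (simp only: integral_divide_zero)
  also have "\<dots> = (\<Sum>(u, v)\<in>offdiag U. (1 - p u w) * (1 - p v w) * \<phi> u v True True
          + (1 - p u w) * (1 - (1 - p v w)) * \<phi> u v True False
          + (1 - (1 - p u w)) * (1 - p v w) * \<phi> u v False True
          + (1 - (1 - p u w)) * (1 - (1 - p v w)) * \<phi> u v False False) / 2"
    using assms(1,2) by (subst expectation_Pi_pmf_bernoulli_offdiag_sum) auto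
  also have "\<dots> = (\<Sum>(u, v)\<in>offdiag U. ecost p pos neg w u v) / 2"
    using assms(3) by (intro arg_cong2[where f = "(/)"] sum.cong)
      (auto simp: offdiag_def \<phi>_def ecost_def algebra_simps)
  finally show ?thesis .
qed

lemma expectation_lp_step_given_pivot:
  assumes "finite U" "\<And>u. u \<in> U \<Longrightarrow> 0 \<le> p u w \<and> p u w \<le> 1"
  shows "measure_pmf.expectation (Pi_pmf U False (\<lambda>u. bernoulli_pmf (1 - p u w)))
           (\<lambda>b. lp_step pos neg x U {u \<in> U. b u})
       = (\<Sum>(u, v)\<in>offdiag U. elp p pos neg x w u v) / 2"
proof -
  define \<phi> where "\<phi> u v a c =
      (if a \<or> c then if pos u v then x u v else if neg u v then 1 - x u v else 0 else 0)" for u v a c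
  have "lp_step pos neg x U {u \<in> U. b u} = (\<Sum>(u, v)\<in>offdiag U. \<phi> u v (b u) (b v)) / 2" for b
    unfolding lp_step_def \<phi>_def by (intro arg_cong2[where f = "(/)"] sum.cong) (auto simp: offdiag_def)
  then have "measure_pmf.expectation (Pi_pmf U False (\<lambda>u. bernoulli_pmf (1 - p u w)))
           (\<lambda>b. lp_step pos neg x U {u \<in> U. b u})
      = measure_pmf.expectation (Pi_pmf U False (\<lambda>u. bernoulli_pmf (1 - p u w)))
           (\<lambda>b. \<Sum>(u, v)\<in>offdiag U. \<phi> u v (b u) (b v)) / 2"
    by (simp only: integral_divide_zero)
  also have "\<dots> = (\<Sum>(u, v)\<in>offdiag U. (1 - p u w) * (1 - p v w) * \<phi> u v True True
          + (1 - p u w) * (1 - (1 - p v w)) * \<phi> u v True False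
          + (1 - (1 - p u w)) * (1 - p v w) * \<phi> u v False True
          + (1 - (1 - p u w)) * (1 - (1 - p v w)) * \<phi> u v False False) / 2"
    using assms by (subst expectation_Pi_pmf_bernoulli_offdiag_sum) auto
  also have "\<dots> = (\<Sum>(u, v)\<in>offdiag U. elp p pos neg x w u v) / 2"
    by (intro arg_cong2[where f = "(/)"] sum.cong) (auto simp: \<phi>_def elp_def algebra_simps)
  finally show ?thesis .
qed

section \<open>Summing over triangles\<close>

lemma sum_offdiag:
  fixes f :: "'a \<Rightarrow> 'a \<Rightarrow> 'b::ab_group_add"
  assumes "finite A"
  shows "(\<Sum>(u, v)\<in>offdiag A. f u v) = (\<Sum>u\<in>A. \<Sum>v\<in>A. f u v) - (\<Sum>u\<in>A. f u u)"
proof -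
  have "A \<times> A = offdiag A \<union> (\<lambda>u. (u, u)) ` A" "offdiag A \<inter> (\<lambda>u. (u, u)) ` A = {}"
    by (auto simp: offdiag_def)
  moreover have "finite (offdiag A)"
    using assms by (auto intro: finite_subset[of _ "A \<times> A"] simp: offdiag_def)
  ultimately have "(\<Sum>(u, v)\<in>A \<times> A. f u v) = (\<Sum>(u, v)\<in>offdiag A. f u v) + (\<Sum>u\<in>A. f u u)"
    using assms by (simp add: sum.union_disjoint sum.reindex inj_on_def)
  then show ?thesis
    by (simp add: sum.cartesian_product)
qed

lemma sum_rotate3:
  "(\<Sum>a\<in>A. \<Sum>b\<in>A. \<Sum>c\<in>A. g b c a) = (\<Sum>a\<in>A. \<Sum>b\<in>A. \<Sum>c\<in>A. g a b c)"
  by (subst sum.swap) (intro sum.cong refl sum.swap)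

lemma sum3_le_of_rotations_le:
  fixes E L :: "'a \<Rightarrow> 'a \<Rightarrow> 'a \<Rightarrow> real"
  assumes "\<And>u v w. u \<in> A \<Longrightarrow> v \<in> A \<Longrightarrow> w \<in> A \<Longrightarrow>
      E u v w + E w u v + E v w u \<le> \<alpha> * (L u v w + L w u v + L v w u)"
  shows "(\<Sum>w\<in>A. \<Sum>u\<in>A. \<Sum>v\<in>A. E u v w) \<le> \<alpha> * (\<Sum>w\<in>A. \<Sum>u\<in>A. \<Sum>v\<in>A. L u v w)"
proof -
  have rotations: "(\<Sum>w\<in>A. \<Sum>u\<in>A. \<Sum>v\<in>A. F u v w + F w u v + F v w u) = 3 * (\<Sum>w\<in>A. \<Sum>u\<in>A. \<Sum>v\<in>A. F u v w)"
    for F :: "'a \<Rightarrow> 'a \<Rightarrow> 'a \<Rightarrow> real"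
    using sum_rotate3[of "\<lambda>w u v. F u v w" A] sum_rotate3[of "\<lambda>v w u. F u v w" A]
    by (simp add: sum.distrib)
  have "(\<Sum>w\<in>A. \<Sum>u\<in>A. \<Sum>v\<in>A. E u v w + E w u v + E v w u)
      \<le> (\<Sum>w\<in>A. \<Sum>u\<in>A. \<Sum>v\<in>A. \<alpha> * (L u v w + L w u v + L v w u))"
    by (intro sum_mono assms)
  then show ?thesis
    by (simp add: rotations sum_distrib_left[symmetric])
qed

lemma ecost_nonneg:
  assumes "0 \<le> p u w" "p u w \<le> 1" "0 \<le> p v w" "p v w \<le> 1"
  shows "0 \<le> ecost p pos neg w u v"
  using assms by (auto simp: ecost_def)

lemma expectation_alg_step_le:
  assumes fin: "finite U"
    and p_range: "\<And>u w. u \<in> U \<Longrightarrow> w \<in> U \<Longrightarrow> 0 \<le> p u w \<and> p u w \<le> 1"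
    and disj: "\<And>u v. u \<in> U \<Longrightarrow> v \<in> U \<Longrightarrow> \<not> (pos u v \<and> neg u v)"
    and elp_diag: "\<And>u w. u \<in> U \<Longrightarrow> w \<in> U \<Longrightarrow> elp p pos neg x w u u = 0"
    and tri: "\<And>u v w. u \<in> U \<Longrightarrow> v \<in> U \<Longrightarrow> w \<in> U \<Longrightarrow>
       ALG3 p pos neg u v w \<le> \<alpha> * LP3 p pos neg x u v w"
  shows "measure_pmf.expectation (pivot_step p U) (alg_step pos neg U)
      \<le> \<alpha> * measure_pmf.expectation (pivot_step p U) (lp_step pos neg x U)"
proof (cases "U = {}")
  case True
  then show ?thesis
    by (simp add: pivot_step_def alg_step_def lp_step_def offdiag_def)
next
  case False
  have alg: "measure_pmf.expectation (pivot_step p U) (alg_step pos neg U)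
      = (\<Sum>w\<in>U. \<Sum>(u, v)\<in>offdiag U. ecost p pos neg w u v) / (2 * card U)"
    using fin False p_range disj
    by (simp add: expectation_pivot_step expectation_alg_step_given_pivot sum_divide_distrib)
  have lp: "measure_pmf.expectation (pivot_step p U) (lp_step pos neg x U)
      = (\<Sum>w\<in>U. \<Sum>(u, v)\<in>offdiag U. elp p pos neg x w u v) / (2 * card U)"
    using fin False p_range
    by (simp add: expectation_pivot_step expectation_lp_step_given_pivot sum_divide_distrib)
  have "(\<Sum>w\<in>U. \<Sum>(u, v)\<in>offdiag U. ecost p pos neg w u v)
      \<le> (\<Sum>w\<in>U. \<Sum>u\<in>U. \<Sum>v\<in>U. ecost p pos neg w u v)"
    using fin p_range by (auto simp: sum_offdiag intro!: sum_mono sum_nonneg ecost_nonneg)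
  also have "\<dots> \<le> \<alpha> * (\<Sum>w\<in>U. \<Sum>u\<in>U. \<Sum>v\<in>U. elp p pos neg x w u v)"
    by (rule sum3_le_of_rotations_le) (use tri in \<open>simp add: ALG3_def LP3_def\<close>)
  also have "\<dots> = \<alpha> * (\<Sum>w\<in>U. \<Sum>(u, v)\<in>offdiag U. elp p pos neg x w u v)"
    using fin elp_diag by (simp add: sum_offdiag)
  finally show ?thesis
    unfolding alg lp by (simp add: divide_right_mono)
qed

section \<open>The pivot run\<close>

lemma expectation_bind_pmf_finite:
  fixes h :: "'b \<Rightarrow> real"
  assumes "finite (set_pmf M)" "\<And>a. a \<in> set_pmf M \<Longrightarrow> finite (set_pmf (K a))"
  shows "measure_pmf.expectation (M \<bind> K) h
       = measure_pmf.expectation M (\<lambda>a. measure_pmf.expectation (K a) h)"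
  using assms by (simp add: pmf_expectation_bind[of "set_pmf M"] integral_measure_pmf[of "set_pmf M"])

lemma pivot_run_invariant:
  assumes "finite V" "\<And>w. w \<in> V \<Longrightarrow> p w w = 0"
  shows "(U, C) \<in> set_pmf (pivot_run p V t) \<Longrightarrow>
    U \<subseteq> V \<and> (\<forall>S\<in>C. S \<subseteq> V - U) \<and> card U \<le> card V - t"
proof (induction t arbitrary: U C)
  case 0
  then show ?case by simp
next
  case (Suc t)
  then obtain U' C' where run: "(U', C') \<in> set_pmf (pivot_run p V t)"
    and step: "(U, C) \<in> set_pmf (if U' = {} then return_pmf (U', C')
                 else map_pmf (\<lambda>S. (U' - S, insert S C')) (pivot_step p U'))"
    by auto
  have IH: "U' \<subseteq> V" "\<forall>S\<in>C'. S \<subseteq> V - U'" "card U' \<le> card V - t"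
    using Suc.IH[OF run] by auto
  show ?case
  proof (cases "U' = {}")
    case True
    then show ?thesis using step IH by auto
  next
    case False
    with step obtain S where S: "S \<in> set_pmf (pivot_step p U')" and UC: "U = U' - S" "C = insert S C'"
      by auto
    have "finite U'"
      using IH(1) assms(1) by (rule finite_subset)
    moreover have "S \<subseteq> U'"
      using S by (rule set_pivot_step_subset)
    moreover have "S \<noteq> {}"
      by (rule set_pivot_step_nonempty[OF \<open>finite U'\<close> False _ S]) (use IH(1) assms(2) in auto)
    ultimately have "card (U' - S) < card U'"
      by (intro psubset_card_mono) auto
    then show ?thesis
      using UC IH \<open>S \<subseteq> U'\<close> by auto
  qed
qed

lemma finite_set_pivot_run:
  assumes "finite V" "\<And>w. w \<in> V \<Longrightarrow> p w w = 0"
  shows "finite (set_pmf (pivot_run p V t))"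
proof (rule finite_subset)
  show "set_pmf (pivot_run p V t) \<subseteq> Pow V \<times> Pow (Pow V)"
    using pivot_run_invariant[of V p _ _ t] assms by fastforce
qed (use assms(1) in simp)

lemma expectation_pivot_run_Suc:
  fixes \<Phi> :: "'a set \<times> 'a set set \<Rightarrow> real"
  assumes "finite V" "\<And>w. w \<in> V \<Longrightarrow> p w w = 0"
  shows "measure_pmf.expectation (pivot_run p V (Suc t)) \<Phi>
       = measure_pmf.expectation (pivot_run p V t) (\<lambda>(U, C). if U = {} then \<Phi> (U, C)
           else measure_pmf.expectation (pivot_step p U) (\<lambda>S. \<Phi> (U - S, insert S C)))"
proof -
  define K where "K = (\<lambda>(U, C). if U = {} then return_pmf (U, C)
    else map_pmf (\<lambda>S. (U - S, insert S C)) (pivot_step p U))"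
  have "finite (set_pmf (K a))" if "a \<in> set_pmf (pivot_run p V t)" for a
  proof -
    have "finite (fst a)"
      using pivot_run_invariant[of V p "fst a" "snd a" t] assms that by (auto intro: finite_subset)
    then show ?thesis
      by (simp add: K_def case_prod_unfold finite_set_pivot_step)
  qed
  then have "measure_pmf.expectation (pivot_run p V (Suc t)) \<Phi>
      = measure_pmf.expectation (pivot_run p V t) (\<lambda>a. measure_pmf.expectation (K a) \<Phi>)"
    using finite_set_pivot_run[of V p t] assms
    by (simp add: K_def[symmetric] expectation_bind_pmf_finite)
  also have "(\<lambda>a. measure_pmf.expectation (K a) \<Phi>) = (\<lambda>(U, C). if U = {} then \<Phi> (U, C)
      else measure_pmf.expectation (pivot_step p U) (\<lambda>S. \<Phi> (U - S, insert S C)))"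
    by (auto simp: K_def)
  finally show ?thesis .
qed

lemma expectation_pivot_run_potential:
  fixes \<Phi> :: "'a set \<times> 'a set set \<Rightarrow> real" and g :: "'a set \<Rightarrow> 'a set \<Rightarrow> real"
  assumes "finite V" "\<And>w. w \<in> V \<Longrightarrow> p w w = 0"
    and increment: "\<And>U C S. U \<subseteq> V \<Longrightarrow> \<forall>T\<in>C. T \<subseteq> V - U \<Longrightarrow> U \<noteq> {} \<Longrightarrow> S \<subseteq> U \<Longrightarrow>
      \<Phi> (U - S, insert S C) = \<Phi> (U, C) + g U S"
    and "g {} {} = 0"
  shows "measure_pmf.expectation (pivot_run p V t) \<Phi> = \<Phi> (V, {})
    + (\<Sum>s<t. measure_pmf.expectation (pivot_run p V s)
         (\<lambda>(U, C). measure_pmf.expectation (pivot_step p U) (g U)))"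
proof (induction t)
  case 0
  then show ?case by simp
next
  case (Suc t)
  define G where "G = (\<lambda>(U, C :: 'a set set). measure_pmf.expectation (pivot_step p U) (g U))"
  have integrable: "integrable (measure_pmf (pivot_run p V t)) f" for f :: "_ \<Rightarrow> real"
    using finite_set_pivot_run[of V p t] assms(1,2) by (simp add: integrable_measure_pmf_finite)
  have step: "(\<lambda>(U, C). if U = {} then \<Phi> (U, C)
        else measure_pmf.expectation (pivot_step p U) (\<lambda>S. \<Phi> (U - S, insert S C))) a
      = \<Phi> a + G a" if "a \<in> set_pmf (pivot_run p V t)" for a
  proof -
    obtain U C where a: "a = (U, C)"
      by (cases a)
    show ?thesis
    proof (cases "U = {}")
      case True
      then show ?thesis
        by (simp add: a G_def pivot_step_def assms(4))
    next
      case False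
      have inv: "U \<subseteq> V" "\<forall>T\<in>C. T \<subseteq> V - U"
        using pivot_run_invariant[of V p U C t] assms(1,2) that a by auto
      then have "finite U"
        using assms(1) by (auto intro: finite_subset)
      have "measure_pmf.expectation (pivot_step p U) (\<lambda>S. \<Phi> (U - S, insert S C))
          = measure_pmf.expectation (pivot_step p U) (\<lambda>S. \<Phi> (U, C) + g U S)"
        using inv False by (intro integral_cong_AE AE_pmfI increment) (auto dest: set_pivot_step_subset)
      also have "\<dots> = \<Phi> (U, C) + G (U, C)"
        using \<open>finite U\<close> by (simp add: G_def integrable_measure_pmf_finite finite_set_pivot_step)
      finally show ?thesis
        using False by (simp add: a)
    qed
  qed
  have "measure_pmf.expectation (pivot_run p V (Suc t)) \<Phi>
      = measure_pmf.expectation (pivot_run p V t) (\<lambda>(U, C). if U = {} then \<Phi> (U, C)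
          else measure_pmf.expectation (pivot_step p U) (\<lambda>S. \<Phi> (U - S, insert S C)))"
    by (rule expectation_pivot_run_Suc) (use assms(1,2) in auto)
  also have "\<dots> = measure_pmf.expectation (pivot_run p V t) (\<lambda>a. \<Phi> a + G a)"
    by (intro integral_cong_AE AE_pmfI step) auto
  also have "\<dots> = measure_pmf.expectation (pivot_run p V t) \<Phi> + measure_pmf.expectation (pivot_run p V t) G"
    by (simp add: integrable)
  finally show ?case
    by (simp add: Suc.IH G_def)
qed

section \<open>Settled pairs\<close>

text \<open>
  A pair is settled once one of its endpoints has left the remaining set \<open>U\<close>; from then on its
  contribution to the cost and to the LP never changes. A negative pair can only lie in a
  common cluster of \<open>C\<close> when both endpoints have left \<open>U\<close>.
\<close>

definition together :: "'a set set \<Rightarrow> 'a \<Rightarrow> 'a \<Rightarrow> bool" where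
  "together C u v \<longleftrightarrow> (\<exists>S\<in>C. u \<in> S \<and> v \<in> S)"

definition settled_cost :: "('a \<Rightarrow> 'a \<Rightarrow> bool) \<Rightarrow> ('a \<Rightarrow> 'a \<Rightarrow> bool) \<Rightarrow> 'a set \<Rightarrow>
    'a set \<times> 'a set set \<Rightarrow> real" where
  "settled_cost pos neg V = (\<lambda>(U, C). (\<Sum>(u, v)\<in>offdiag V.
      (if pos u v \<and> \<not> (u \<in> U \<and> v \<in> U) \<and> \<not> together C u v then 1 else 0)
    + (if neg u v \<and> together C u v then 1 else 0)) / 2)"

definition settled_lp :: "('a \<Rightarrow> 'a \<Rightarrow> bool) \<Rightarrow> ('a \<Rightarrow> 'a \<Rightarrow> bool) \<Rightarrow> ('a \<Rightarrow> 'a \<Rightarrow> real) \<Rightarrow>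
    'a set \<Rightarrow> 'a set \<times> 'a set set \<Rightarrow> real" where
  "settled_lp pos neg x V = (\<lambda>(U, C). (\<Sum>(u, v)\<in>offdiag V.
      if u \<in> U \<and> v \<in> U then 0 else if pos u v then x u v else if neg u v then 1 - x u v else 0) / 2)"

lemma sum_offdiag_subset:
  assumes "finite V" "U \<subseteq> V"
  shows "(\<Sum>(u, v)\<in>offdiag U. f u v) = (\<Sum>(u, v)\<in>offdiag V. if u \<in> U \<and> v \<in> U then f u v else 0)"
proof -
  have "offdiag U = {z \<in> offdiag V. fst z \<in> U \<and> snd z \<in> U}"
    using assms(2) by (auto simp: offdiag_def)
  moreover have "finite (offdiag V)"
    using assms(1) by (auto intro: finite_subset[of _ "V \<times> V"] simp: offdiag_def)
  ultimately show ?thesis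
    by (simp add: sum.inter_filter case_prod_unfold)
qed

lemma settled_cost_step:
  assumes "finite V" "U \<subseteq> V" "\<forall>T\<in>C. T \<subseteq> V - U" "S \<subseteq> U"
  shows "settled_cost pos neg V (U - S, insert S C) = settled_cost pos neg V (U, C) + alg_step pos neg U S"
proof -
  have "together C u v \<Longrightarrow> u \<notin> U" for u v
    using assms(3) by (auto simp: together_def)
  moreover have "together (insert S C) u v \<longleftrightarrow> u \<in> S \<and> v \<in> S \<or> together C u v" for u v
    by (auto simp: together_def)
  ultimately show ?thesis
    unfolding settled_cost_def alg_step_def sum_offdiag_subset[OF assms(1,2)]
    using assms(4) by (auto simp: add_divide_distrib[symmetric] sum.distrib[symmetric] intro!: sum.cong)
qed

lemma settled_lp_step:
  assumes "finite V" "U \<subseteq> V" "S \<subseteq> U"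
  shows "settled_lp pos neg x V (U - S, insert S C) = settled_lp pos neg x V (U, C) + lp_step pos neg x U S"
  unfolding settled_lp_def lp_step_def sum_offdiag_subset[OF assms(1,2)]
  using assms(3) by (auto simp: add_divide_distrib[symmetric] sum.distrib[symmetric] intro!: sum.cong)

lemma expectation_cluster_cost:
  assumes "finite V" "\<And>w. w \<in> V \<Longrightarrow> p w w = 0"
  shows "measure_pmf.expectation (pivot_output p V) (cluster_cost pos neg V)
       = (\<Sum>t<card V. exp_alg p pos neg V t)"
proof -
  have "cluster_cost pos neg V C = settled_cost pos neg V (U, C)"
    if "(U, C) \<in> set_pmf (pivot_run p V (card V))" for U C
  proof -
    have "U = {}"
      using pivot_run_invariant[of V p U C "card V"] assms that by (auto dest: finite_subset)
    then show ?thesis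
      by (simp add: cluster_cost_def settled_cost_def together_def)
  qed
  then have "measure_pmf.expectation (pivot_output p V) (cluster_cost pos neg V)
      = measure_pmf.expectation (pivot_run p V (card V)) (settled_cost pos neg V)"
    unfolding pivot_output_def by (auto intro!: integral_cong_AE AE_pmfI)
  also have "\<dots> = settled_cost pos neg V (V, {}) + (\<Sum>t<card V. measure_pmf.expectation (pivot_run p V t)
      (\<lambda>(U, C). measure_pmf.expectation (pivot_step p U) (alg_step pos neg U)))"
    by (rule expectation_pivot_run_potential)
       (auto simp: assms settled_cost_step alg_step_def offdiag_def)
  also have "\<dots> = (\<Sum>t<card V. exp_alg p pos neg V t)"
    by (auto simp: settled_cost_def together_def exp_alg_def offdiag_def intro!: sum.neutral)
  finally show ?thesis .
qed

lemma sum_exp_lp_le_lp_obj: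
  assumes "finite V" "\<And>w. w \<in> V \<Longrightarrow> p w w = 0"
    and "\<And>u v. u \<in> V \<Longrightarrow> v \<in> V \<Longrightarrow> 0 \<le> x u v \<and> x u v \<le> 1"
  shows "(\<Sum>t<n. exp_lp p pos neg x V t) \<le> lp_obj pos neg x V"
proof -
  have "measure_pmf.expectation (pivot_run p V n) (settled_lp pos neg x V)
      = settled_lp pos neg x V (V, {}) + (\<Sum>t<n. measure_pmf.expectation (pivot_run p V t)
          (\<lambda>(U, C). measure_pmf.expectation (pivot_step p U) (lp_step pos neg x U)))"
    by (rule expectation_pivot_run_potential)
       (auto simp: assms settled_lp_step lp_step_def offdiag_def)
  then have "(\<Sum>t<n. exp_lp p pos neg x V t) = measure_pmf.expectation (pivot_run p V n) (settled_lp pos neg x V)"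
    by (auto simp: settled_lp_def exp_lp_def offdiag_def intro!: sum.neutral)
  also have "\<dots> \<le> measure_pmf.expectation (pivot_run p V n) (\<lambda>_. lp_obj pos neg x V)"
    using finite_set_pivot_run[of V p n] assms
    by (intro integral_mono integrable_measure_pmf_finite)
       (auto simp: settled_lp_def lp_obj_def offdiag_def case_prod_unfold intro!: divide_right_mono sum_mono)
  finally show ?thesis
    by simp
qed

lemma exp_alg_le_mult_exp_lp:
  assumes "finite V" "\<And>w. w \<in> V \<Longrightarrow> p w w = 0"
    and "\<And>u w. u \<in> V \<Longrightarrow> w \<in> V \<Longrightarrow> 0 \<le> p u w \<and> p u w \<le> 1"
    and "\<And>u v. u \<in> V \<Longrightarrow> v \<in> V \<Longrightarrow> \<not> (pos u v \<and> neg u v)"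
    and "\<And>u w. u \<in> V \<Longrightarrow> w \<in> V \<Longrightarrow> elp p pos neg x w u u = 0"
    and "\<And>u v w. u \<in> V \<Longrightarrow> v \<in> V \<Longrightarrow> w \<in> V \<Longrightarrow>
       ALG3 p pos neg u v w \<le> \<alpha> * LP3 p pos neg x u v w"
  shows "exp_alg p pos neg V t \<le> \<alpha> * exp_lp p pos neg x V t"
proof -
  have "measure_pmf.expectation (pivot_step p U) (alg_step pos neg U)
      \<le> \<alpha> * measure_pmf.expectation (pivot_step p U) (lp_step pos neg x U)"
    if "(U, C) \<in> set_pmf (pivot_run p V t)" for U C
  proof -
    have "U \<subseteq> V"
      using pivot_run_invariant[of V p U C t] assms(1,2) that by auto
    then show ?thesis
      by (intro expectation_alg_step_le)
         (use assms(1,3-6) in \<open>auto simp: subset_iff intro: finite_subset\<close>)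
  qed
  then have "exp_alg p pos neg V t \<le> measure_pmf.expectation (pivot_run p V t)
      (\<lambda>(U, C). \<alpha> * measure_pmf.expectation (pivot_step p U) (lp_step pos neg x U))"
    using finite_set_pivot_run[of V p t] assms(1,2) unfolding exp_alg_def
    by (intro integral_mono_AE AE_pmfI integrable_measure_pmf_finite) auto
  then show ?thesis
    by (simp add: exp_lp_def case_prod_unfold)
qed

theorem lemma1:
  fixes V :: "'a set"
    and pos neg :: "'a \<Rightarrow> 'a \<Rightarrow> bool"
    and x :: "'a \<Rightarrow> 'a \<Rightarrow> real"
    and fp fm fo :: "real \<Rightarrow> real"
    and \<alpha> :: real
  assumes finV: "finite V"
    and pos_sym: "\<And>u v. u \<in> V \<Longrightarrow> v \<in> V \<Longrightarrow> pos u v = pos v u"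
    and neg_sym: "\<And>u v. u \<in> V \<Longrightarrow> v \<in> V \<Longrightarrow> neg u v = neg v u"
    and disj: "\<And>u v. u \<in> V \<Longrightarrow> v \<in> V \<Longrightarrow> \<not> (pos u v \<and> neg u v)"
    and neg_irrefl: "\<And>u. u \<in> V \<Longrightarrow> \<not> neg u u"
    and fp_range: "\<And>y. 0 \<le> y \<Longrightarrow> y \<le> 1 \<Longrightarrow> 0 \<le> fp y \<and> fp y \<le> 1"
    and fm_range: "\<And>y. 0 \<le> y \<Longrightarrow> y \<le> 1 \<Longrightarrow> 0 \<le> fm y \<and> fm y \<le> 1"
    and fo_range: "\<And>y. 0 \<le> y \<Longrightarrow> y \<le> 1 \<Longrightarrow> 0 \<le> fo y \<and> fo y \<le> 1"
    and f0: "fp 0 = 0" "fm 0 = 0" "fo 0 = 0"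
    and feas: "lp_feasible V x"
    and alpha_pos: "\<alpha> > 0"
    and tri: "\<And>u v w. u \<in> V \<Longrightarrow> v \<in> V \<Longrightarrow> w \<in> V \<Longrightarrow>
       ALG3 (prob_p fp fm fo pos neg x) pos neg u v w
         \<le> \<alpha> * LP3 (prob_p fp fm fo pos neg x) pos neg x u v w"
  shows "(\<forall>t. exp_alg (prob_p fp fm fo pos neg x) pos neg V t
              \<le> \<alpha> * exp_lp (prob_p fp fm fo pos neg x) pos neg x V t)
       \<and> measure_pmf.expectation (pivot_output (prob_p fp fm fo pos neg x) V)
           (cluster_cost pos neg V)
         \<le> \<alpha> * lp_obj pos neg x V"
proof -
  define p where "p = prob_p fp fm fo pos neg x"
  have x_range: "0 \<le> x u v \<and> x u v \<le> 1" if "u \<in> V" "v \<in> V" for u v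
    using feas that by (auto simp: lp_feasible_def)
  have x_diag: "x u u = 0" if "u \<in> V" for u
    using feas that by (auto simp: lp_feasible_def)
  have p_range: "0 \<le> p u w \<and> p u w \<le> 1" if "u \<in> V" "w \<in> V" for u w
    using x_range[OF that] fp_range fm_range fo_range by (auto simp: p_def prob_p_def)
  have p_diag: "p w w = 0" if "w \<in> V" for w
    using x_diag[OF that] f0 by (auto simp: p_def prob_p_def)
  have elp_diag: "elp p pos neg x w u u = 0" if "u \<in> V" for u w
    using x_diag[OF that] neg_irrefl[OF that] by (auto simp: elp_def)
  have step: "exp_alg p pos neg V t \<le> \<alpha> * exp_lp p pos neg x V t" for t
    by (rule exp_alg_le_mult_exp_lp) (use finV p_diag p_range disj elp_diag tri in \<open>auto simp: p_def\<close>)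
  have "measure_pmf.expectation (pivot_output p V) (cluster_cost pos neg V)
      = (\<Sum>t<card V. exp_alg p pos neg V t)"
    using finV p_diag by (rule expectation_cluster_cost)
  also have "\<dots> \<le> \<alpha> * (\<Sum>t<card V. exp_lp p pos neg x V t)"
    by (simp add: sum_distrib_left sum_mono step)
  also have "\<dots> \<le> \<alpha> * lp_obj pos neg x V"
    using alpha_pos finV p_diag x_range by (intro mult_left_mono sum_exp_lp_le_lp_obj) auto
  finally show ?thesis
    using step unfolding p_def by blast
qed

end
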